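(* If $G$ and $H$ are finite simple graphs without isolated vertices that are both efficient open domination graphs, then $\gamma_{tR}(G\times H)\le 2\rho_o(G)\rho_o(H)$.
   Context: An open packing of $G$ is a set $D$ of vertices with $N(u)\cap N(v)=\emptyset$ for all distinct $u,v\in D$ (open neighborhoods); $\rho_o(G)$ is the maximum size of an open packing. A set $D$ is total dominating if every vertex of $G$ has a neighbor in $D$. $G$ is an efficient open domination graph if it has a total dominating set that is also an open packing. A total Roman dominating function on $G$ is a map $f:V(G)\to\{0,1,2\}$ such that every vertex with label 0 has a neighbor with label 2 and the subgraph induced by vertices with positive labels has no isolated vertices; $\gamma_{tR}(G)$ is the minimum of $\sum_v f(v)$ over such $f$. The direct product $G\times H$ has vertex set $V(G)\times V(H)$, with $(g,h)(g',h')$ an edge iff $gg'\in E(G)$ and $hh'\in E(H)$. *)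

theory Defs
  imports Main
begin

definition simple_graph :: "'a set \<Rightarrow> ('a \<Rightarrow> 'a \<Rightarrow> bool) \<Rightarrow> bool" where
  "simple_graph V E \<longleftrightarrow> finite V \<and> (\<forall>u v. E u v \<longrightarrow> u \<in> V \<and> v \<in> V)
      \<and> (\<forall>u v. E u v \<longrightarrow> E v u) \<and> (\<forall>v. \<not> E v v)"

definition open_nbhd :: "'a set \<Rightarrow> ('a \<Rightarrow> 'a \<Rightarrow> bool) \<Rightarrow> 'a \<Rightarrow> 'a set" where
  "open_nbhd V E v = {u \<in> V. E v u}"

definition no_isolated :: "'a set \<Rightarrow> ('a \<Rightarrow> 'a \<Rightarrow> bool) \<Rightarrow> bool" where
  "no_isolated V E \<longleftrightarrow> (\<forall>v\<in>V. \<exists>u\<in>V. E v u)"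

definition open_packing :: "'a set \<Rightarrow> ('a \<Rightarrow> 'a \<Rightarrow> bool) \<Rightarrow> 'a set \<Rightarrow> bool" where
  "open_packing V E D \<longleftrightarrow> D \<subseteq> V \<and>
     (\<forall>u\<in>D. \<forall>v\<in>D. u \<noteq> v \<longrightarrow> open_nbhd V E u \<inter> open_nbhd V E v = {})"

definition open_packing_number :: "'a set \<Rightarrow> ('a \<Rightarrow> 'a \<Rightarrow> bool) \<Rightarrow> nat" where
  "open_packing_number V E = Max (card ` {D. open_packing V E D})"

definition total_dominating :: "'a set \<Rightarrow> ('a \<Rightarrow> 'a \<Rightarrow> bool) \<Rightarrow> 'a set \<Rightarrow> bool" where
  "total_dominating V E D \<longleftrightarrow> D \<subseteq> V \<and> (\<forall>v\<in>V. \<exists>u\<in>D. E v u)"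

definition efficient_open_domination_graph :: "'a set \<Rightarrow> ('a \<Rightarrow> 'a \<Rightarrow> bool) \<Rightarrow> bool" where
  "efficient_open_domination_graph V E \<longleftrightarrow>
     (\<exists>D. total_dominating V E D \<and> open_packing V E D)"

definition total_roman_dom_fun :: "'a set \<Rightarrow> ('a \<Rightarrow> 'a \<Rightarrow> bool) \<Rightarrow> ('a \<Rightarrow> nat) \<Rightarrow> bool" where
  "total_roman_dom_fun V E f \<longleftrightarrow>
     (\<forall>v\<in>V. f v \<in> {0,1,2}) \<and>
     (\<forall>v\<in>V. f v = 0 \<longrightarrow> (\<exists>u\<in>V. E v u \<and> f u = 2)) \<and>
     (\<forall>v\<in>V. f v > 0 \<longrightarrow> (\<exists>u\<in>V. E v u \<and> f u > 0))"

definition total_roman_dom_number :: "'a set \<Rightarrow> ('a \<Rightarrow> 'a \<Rightarrow> bool) \<Rightarrow> nat" where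
  "total_roman_dom_number V E =
     Min {(\<Sum>v\<in>V. f v) | f. total_roman_dom_fun V E f}"

definition direct_prod_edges ::
  "('a \<Rightarrow> 'a \<Rightarrow> bool) \<Rightarrow> ('b \<Rightarrow> 'b \<Rightarrow> bool) \<Rightarrow> ('a \<times> 'b) \<Rightarrow> ('a \<times> 'b) \<Rightarrow> bool" where
  "direct_prod_edges E F x y \<longleftrightarrow> E (fst x) (fst y) \<and> F (snd x) (snd y)"

end

theory Submission
  imports Defs
begin

text \<open>If \<open>D\<close> and \<open>D'\<close> are efficient open dominating sets of \<open>G\<close> and \<open>H\<close>, then
  \<open>D \<times> D'\<close> totally dominates \<open>G \<times> H\<close>, so labelling it with 2 and every other vertex with 0 is
  a total Roman dominating function of weight \<open>2 |D| |D'|\<close>. Being open packings, \<open>D\<close> and \<open>D'\<close>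
  have at most \<open>\<rho>\<^sub>o(G)\<close> and \<open>\<rho>\<^sub>o(H)\<close> vertices.\<close>

lemma card_le_open_packing_number:
  assumes "finite V" and "open_packing V E D"
  shows "card D \<le> open_packing_number V E"
proof -
  have "{D. open_packing V E D} \<subseteq> Pow V" by (auto simp: open_packing_def)
  then have "finite {D. open_packing V E D}"
    using assms(1) by (meson finite_Pow_iff finite_subset)
  then show ?thesis
    unfolding open_packing_number_def using assms(2) by simp
qed

lemma total_dominating_direct_prod:
  assumes "total_dominating V E D" and "total_dominating W F D'"
  shows "total_dominating (V \<times> W) (direct_prod_edges E F) (D \<times> D')"
  using assms by (fastforce simp: total_dominating_def direct_prod_edges_def)

lemma total_roman_dom_fun_twice_indicator:
  assumes "total_dominating V E D"
  shows "total_roman_dom_fun V E (\<lambda>v. if v \<in> D then 2 else 0)"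
  using assms unfolding total_roman_dom_fun_def total_dominating_def by (auto 0 4 intro: bexI)

lemma total_roman_dom_number_le:
  assumes "finite V" and "total_roman_dom_fun V E f"
  shows "total_roman_dom_number V E \<le> (\<Sum>v\<in>V. f v)"
proof -
  let ?S = "{(\<Sum>v\<in>V. g v) | g. total_roman_dom_fun V E g}"
  have "?S \<subseteq> {..2 * card V}"
  proof
    fix s assume "s \<in> ?S"
    then obtain g where s: "s = (\<Sum>v\<in>V. g v)" and g: "total_roman_dom_fun V E g"
      by blast
    from g have "\<forall>v\<in>V. g v \<le> 2" unfolding total_roman_dom_fun_def by fastforce
    then have "(\<Sum>v\<in>V. g v) \<le> (\<Sum>v\<in>V. 2)" by (intro sum_mono) blast
    then show "s \<in> {..2 * card V}" using s by simp
  qed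
  then have "finite ?S" by (rule finite_subset) simp
  then show ?thesis
    unfolding total_roman_dom_number_def using assms(2) by (intro Min_le) blast+
qed

lemma total_roman_dom_number_le_twice_card_total_dominating:
  assumes "finite V" and "total_dominating V E D"
  shows "total_roman_dom_number V E \<le> 2 * card D"
proof -
  have "D \<subseteq> V" using assms(2) by (simp add: total_dominating_def)
  then have "(\<Sum>v\<in>V. if v \<in> D then 2 else 0) = 2 * card D"
    using assms(1) by (simp add: sum.If_cases Int_absorb1)
  then show ?thesis
    using total_roman_dom_number_le[OF assms(1) total_roman_dom_fun_twice_indicator[OF assms(2)]]
    by simp
qed

theorem corollary2p5:
  fixes V :: "'a set" and E :: "'a \<Rightarrow> 'a \<Rightarrow> bool"
    and W :: "'b set" and F :: "'b \<Rightarrow> 'b \<Rightarrow> bool"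
  assumes "simple_graph V E" and "simple_graph W F"
    and "no_isolated V E" and "no_isolated W F"
    and "efficient_open_domination_graph V E"
    and "efficient_open_domination_graph W F"
  shows "total_roman_dom_number (V \<times> W) (direct_prod_edges E F)
           \<le> 2 * open_packing_number V E * open_packing_number W F"
proof -
  obtain D where D: "total_dominating V E D" "open_packing V E D"
    using assms(5) efficient_open_domination_graph_def by blast
  obtain D' where D': "total_dominating W F D'" "open_packing W F D'"
    using assms(6) efficient_open_domination_graph_def by blast
  have "finite V" "finite W" using assms(1,2) by (simp_all add: simple_graph_def)
  then have "total_roman_dom_number (V \<times> W) (direct_prod_edges E F) \<le> 2 * card (D \<times> D')"
    by (intro total_roman_dom_number_le_twice_card_total_dominating
        total_dominating_direct_prod D(1) D'(1)) simp
  also have "\<dots> = 2 * (card D * card D')" by (simp add: card_cartesian_product)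
  also have "\<dots> \<le> 2 * (open_packing_number V E * open_packing_number W F)"
    using card_le_open_packing_number[OF \<open>finite V\<close> D(2)]
      card_le_open_packing_number[OF \<open>finite W\<close> D'(2)]
    by (simp add: mult_mono)
  finally show ?thesis by simp
qed

end
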